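(* Let $\mathcal{X}\subseteq\mathbb{R}^d$ be a set such that $\operatorname{cl}\operatorname{conv}(\mathcal{X})$ is a polyhedron. Then the enhanced separation oracle (described in the context), run on any point $\bar x\in\mathbb{R}^d$, the set $\mathcal{X}$, a tolerance $\epsilon$, stored sets $V,R$, and optionally a vector $c$, terminates in a finite number of steps.
   Context: The enhanced separation oracle has access to an oracle optimizing linear functions over $\mathcal{X}$ (returning, when the maximum is finite, an optimal solution that is an extreme point (vertex) of $\operatorname{cl}\operatorname{conv}(\mathcal{X})$, and, when unbounded, an extreme ray of $\operatorname{cl}\operatorname{conv}(\mathcal{X})$ along which the objective increases). It keeps a finite set $V$ of vertices and a finite set $R$ of extreme rays of $\operatorname{cl}\operatorname{conv}(\mathcal{X})$. Procedure: (1) If $c$ is given, compute $\tilde x\in\arg\min\{c^\top x:x\in\mathcal{X}\}$ and $\bar z=c^\top\tilde x$; if $c^\top\bar x<\bar z$ return "no" and the cut $-c^\top x\le-\bar z$; if $\|\bar x-\tilde x\|<\epsilon$ return "yes" with $V=\{\bar x\}$, $\alpha=(1)$. (2) Repeat: let $\mathcal{W}=\operatorname{conv}(V)+\operatorname{cone}(R)$ and solve the linear program $\max_{\pi,\pi_0,\tau_1\ge0,\tau_2\ge0}\ \bar x^\top\pi-\pi_0$ subject to $\pi^\top v-\pi_0\le0$ for all $v\in V$, $\pi^\top r\le0$ for all $r\in R$, $\pi+\tau_1-\tau_2=0$, $\tau_1+\tau_2=1$ (componentwise/sum conventions normalizing $\|\pi\|_1=1$). If its optimal value is $0$ (up to $\epsilon$),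 i.e. $\bar x\in\mathcal{W}$, return "yes" with $(V,R)$ and the dual multipliers $\alpha,\beta$ of the vertex and ray constraints. Otherwise, with optimal $(\bar\pi,\bar\pi_0)$, solve $\max\{\bar\pi^\top x:x\in\mathcal{X}\}$: if it is unbounded, add to $R$ an extreme ray $r$ returned by the oracle; if it has an optimal solution $\nu$, then if $\bar\pi^\top\nu<\bar\pi^\top\bar x$ return "no" and the cut $\bar\pi^\top x\le\bar\pi^\top\nu$, else add $\nu$ to $V$. *)

theory Defs
  imports "HOL-Analysis.Analysis"
begin

definition rec_cone :: "('a::real_vector) set \<Rightarrow> 'a set" where
  "rec_cone C = {r. \<forall>x\<in>C. \<forall>t::real. t \<ge> 0 \<longrightarrow> x + t *\<^sub>R r \<in> C}"

definition extreme_ray_of :: "('a::real_vector) \<Rightarrow> 'a set \<Rightarrow> bool" where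
  "extreme_ray_of r C \<longleftrightarrow> r \<noteq> 0 \<and> r \<in> rec_cone C \<and>
     (\<forall>r1 r2. r1 \<in> rec_cone C \<and> r2 \<in> rec_cone C \<and> r = r1 + r2 \<longrightarrow>
        (\<exists>t\<ge>0. r1 = t *\<^sub>R r) \<and> (\<exists>t\<ge>0. r2 = t *\<^sub>R r))"

definition sep_lp_feasible ::
  "(real^'d) set \<Rightarrow> (real^'d) set \<Rightarrow> real^'d \<Rightarrow> real \<Rightarrow> real^'d \<Rightarrow> real^'d \<Rightarrow> bool" where
  "sep_lp_feasible V R p p0 t1 t2 \<longleftrightarrow>
     (\<forall>v\<in>V. p \<bullet> v - p0 \<le> 0) \<and> (\<forall>r\<in>R. p \<bullet> r \<le> 0) \<and>
     p + t1 - t2 = 0 \<and> (\<forall>i. t1 $ i \<ge> 0) \<and> (\<forall>i. t2 $ i \<ge> 0) \<and>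
     (\<Sum>i\<in>UNIV. t1 $ i + t2 $ i) = 1"

definition sep_lp_optimal ::
  "(real^'d) set \<Rightarrow> (real^'d) set \<Rightarrow> real^'d \<Rightarrow> real^'d \<Rightarrow> real \<Rightarrow> real^'d \<Rightarrow> real^'d \<Rightarrow> bool" where
  "sep_lp_optimal V R xb p p0 t1 t2 \<longleftrightarrow> sep_lp_feasible V R p p0 t1 t2 \<and>
     (\<forall>q q0 s1 s2. sep_lp_feasible V R q q0 s1 s2 \<longrightarrow> xb \<bullet> q - q0 \<le> xb \<bullet> p - p0)"

text \<open>States of the enhanced separation oracle: the start state (holding the
  initially stored V and R), the loop state with current V and R, and the
  terminated state (after returning "yes" or "no").\<close>
datatype 'a esep_state = Start "'a set" "'a set" | Iter "'a set" "'a set" | Stop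

text \<open>C = cl conv X.  The linear optimisation oracle may return any vertex
  (extreme point of C) that is optimal, or any extreme ray of C along which
  the objective increases when the problem is unbounded.\<close>
inductive esep_step ::
  "(real^'d) set \<Rightarrow> real^'d \<Rightarrow> real \<Rightarrow> (real^'d) option \<Rightarrow>
   (real^'d) esep_state \<Rightarrow> (real^'d) esep_state \<Rightarrow> bool"
  for X xb eps c where
  start_noc: "c = None \<Longrightarrow> esep_step X xb eps c (Start V R) (Iter V R)"
| start_no: "\<lbrakk>c = Some cc; xt extreme_point_of (closure (convex hull X));
     \<forall>x\<in>X. cc \<bullet> xt \<le> cc \<bullet> x; cc \<bullet> xb < cc \<bullet> xt\<rbrakk>
     \<Longrightarrow> esep_step X xb eps c (Start V R) Stop"
| start_yes: "\<lbrakk>c = Some cc; xt extreme_point_of (closure (convex hull X));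
     \<forall>x\<in>X. cc \<bullet> xt \<le> cc \<bullet> x; \<not> cc \<bullet> xb < cc \<bullet> xt; norm (xb - xt) < eps\<rbrakk>
     \<Longrightarrow> esep_step X xb eps c (Start V R) Stop"
| start_go: "\<lbrakk>c = Some cc; xt extreme_point_of (closure (convex hull X));
     \<forall>x\<in>X. cc \<bullet> xt \<le> cc \<bullet> x; \<not> cc \<bullet> xb < cc \<bullet> xt; \<not> norm (xb - xt) < eps\<rbrakk>
     \<Longrightarrow> esep_step X xb eps c (Start V R) (Iter V R)"
| iter_yes: "\<lbrakk>sep_lp_optimal V R xb p p0 t1 t2; \<bar>xb \<bullet> p - p0\<bar> \<le> eps\<rbrakk>
     \<Longrightarrow> esep_step X xb eps c (Iter V R) Stop"
| iter_ray: "\<lbrakk>sep_lp_optimal V R xb p p0 t1 t2; \<not> \<bar>xb \<bullet> p - p0\<bar> \<le> eps;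
     \<not> bdd_above ((\<lambda>x. p \<bullet> x) ` X);
     extreme_ray_of r (closure (convex hull X)); p \<bullet> r > 0\<rbrakk>
     \<Longrightarrow> esep_step X xb eps c (Iter V R) (Iter V (insert r R))"
| iter_no: "\<lbrakk>sep_lp_optimal V R xb p p0 t1 t2; \<not> \<bar>xb \<bullet> p - p0\<bar> \<le> eps;
     nu extreme_point_of (closure (convex hull X)); \<forall>x\<in>X. p \<bullet> x \<le> p \<bullet> nu;
     p \<bullet> nu < p \<bullet> xb\<rbrakk>
     \<Longrightarrow> esep_step X xb eps c (Iter V R) Stop"
| iter_add: "\<lbrakk>sep_lp_optimal V R xb p p0 t1 t2; \<not> \<bar>xb \<bullet> p - p0\<bar> \<le> eps;
     nu extreme_point_of (closure (convex hull X)); \<forall>x\<in>X. p \<bullet> x \<le> p \<bullet> nu;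
     \<not> p \<bullet> nu < p \<bullet> xb\<rbrakk>
     \<Longrightarrow> esep_step X xb eps c (Iter V R) (Iter (insert nu V) R)"

end

theory Submission
  imports Defs
begin

text \<open>Every iteration of the loop that does not stop adds either a vertex of
  \<open>cl conv X\<close> not yet in \<open>V\<close> or an extreme ray of \<open>cl conv X\<close> that is not a positive
  multiple of a ray in \<open>R\<close>: the optimal LP solution \<open>(\<pi>, \<pi>\<^sub>0)\<close> has positive value, so
  it separates the query point from \<open>V\<close> and the new vertex \<open>\<nu>\<close>, and \<open>\<pi>\<^sup>T r \<le> 0\<close> on \<open>R\<close> but
  \<open>\<pi>\<^sup>T r > 0\<close> for the new ray.  A polyhedron has finitely many vertices, and its
  extreme rays fall into finitely many classes up to positive scaling, since an
  extreme ray is determined up to scaling by the set of defining inequalities it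
  satisfies with equality.  So the number of vertices and ray classes collected is
  a bounded quantity that strictly increases along the loop.\<close>

lemma rec_cone_empty [simp]: "rec_cone {} = UNIV"
  by (simp add: rec_cone_def)

lemma not_extreme_ray_of_empty: "\<not> extreme_ray_of r ({}::'a::real_vector set)"
proof
  assume r: "extreme_ray_of r ({}::'a set)"
  moreover have "r = 2 *\<^sub>R r + - r"
    by (simp add: scaleR_2)
  ultimately obtain t where t: "t \<ge> 0" "- r = t *\<^sub>R r"
    unfolding extreme_ray_of_def rec_cone_empty by blast
  then have "(t + 1) *\<^sub>R r = 0"
    using t(2)[symmetric] by (simp add: scaleR_add_left)
  with t r show False
    by (simp add: extreme_ray_of_def)
qed

lemma rec_cone_halfspaces:
  fixes C :: "'a::real_inner set"
  assumes C: "C = {x. \<forall>h\<in>F. a h \<bullet> x \<le> b h}" and "C \<noteq> {}"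
  shows "v \<in> rec_cone C \<longleftrightarrow> (\<forall>h\<in>F. a h \<bullet> v \<le> 0)"
proof
  obtain x0 where x0: "x0 \<in> C"
    using \<open>C \<noteq> {}\<close> by blast
  assume v: "v \<in> rec_cone C"
  show "\<forall>h\<in>F. a h \<bullet> v \<le> 0"
  proof (intro ballI, rule ccontr)
    fix h assume h: "h \<in> F" "\<not> a h \<bullet> v \<le> 0"
    define t where "t = (\<bar>b h - a h \<bullet> x0\<bar> + 1) / (a h \<bullet> v)"
    have "x0 + t *\<^sub>R v \<in> C"
      using v x0 h by (simp add: rec_cone_def t_def)
    then have "a h \<bullet> x0 + t * (a h \<bullet> v) \<le> b h"
      using h C by (auto simp: inner_add_right)
    moreover have "t * (a h \<bullet> v) = \<bar>b h - a h \<bullet> x0\<bar> + 1"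
      using h by (simp add: t_def)
    ultimately show False
      by linarith
  qed
next
  assume v: "\<forall>h\<in>F. a h \<bullet> v \<le> 0"
  have "a h \<bullet> (x + t *\<^sub>R v) \<le> b h"
    if "x \<in> C" "t \<ge> 0" "h \<in> F" for x t h
  proof -
    have "t * (a h \<bullet> v) \<le> 0"
      using v that by (simp add: mult_nonneg_nonpos)
    moreover have "a h \<bullet> x \<le> b h"
      using that C by auto
    ultimately show ?thesis
      by (simp add: inner_add_right)
  qed
  then show "v \<in> rec_cone C"
    using C by (auto simp: rec_cone_def)
qed

lemma finite_ex_pos_le_scaled:
  fixes u w :: "'i \<Rightarrow> real"
  assumes "finite F" and "\<And>h. h \<in> F \<Longrightarrow> u h < 0 \<or> (u h = 0 \<and> w h = 0)"
  shows "\<exists>d>0. \<forall>h\<in>F. u h \<le> d * w h"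
proof -
  have ev: "\<forall>\<^sub>F d in at_right 0. u h \<le> d * w h" if "h \<in> F" for h
  proof (cases "u h < 0")
    case True
    have "((\<lambda>d. d * w h) \<longlongrightarrow> 0) (at_right 0)"
      by (auto intro!: tendsto_eq_intros)
    then have "\<forall>\<^sub>F d in at_right 0. u h < d * w h"
      using True by (rule order_tendstoD(1))
    then show ?thesis
      by (rule eventually_mono) simp
  next
    case False
    then show ?thesis
      using assms(2)[OF that] by simp
  qed
  have "\<forall>\<^sub>F d in at_right 0. \<forall>h\<in>F. u h \<le> d * w h"
    by (rule eventually_ball_finite[OF \<open>finite F\<close>]) (use ev in blast)
  then have "\<forall>\<^sub>F d in at_right 0. (\<forall>h\<in>F. u h \<le> d * w h) \<and> 0 < d"
    using eventually_at_right_less[of "0::real"] by (rule eventually_conj)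
  then show ?thesis
    using eventually_happens' trivial_limit_at_right_real by blast
qed

lemma extreme_rays_same_active_constraints:
  fixes C :: "'a::real_inner set"
  assumes F: "finite F" and C: "C = {x. \<forall>h\<in>F. a h \<bullet> x \<le> b h}"
    and r: "extreme_ray_of r C" and r': "extreme_ray_of r' C"
    and active: "\<And>h. h \<in> F \<Longrightarrow> a h \<bullet> r = 0 \<longleftrightarrow> a h \<bullet> r' = 0"
  shows "\<exists>t>0. r' = t *\<^sub>R r"
proof -
  have "C \<noteq> {}"
    using r not_extreme_ray_of_empty by blast
  note rec_cone = rec_cone_halfspaces[OF C this]
  have "r \<in> rec_cone C" "r' \<in> rec_cone C" "r' \<noteq> 0"
    using r r' by (simp_all add: extreme_ray_of_def)
  then have r_le: "a h \<bullet> r \<le> 0" and r'_le: "a h \<bullet> r' \<le> 0" if "h \<in> F" for h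
    using that by (simp_all add: rec_cone)
  have sign: "a h \<bullet> r < 0 \<or> (a h \<bullet> r = 0 \<and> a h \<bullet> r' = 0)" if "h \<in> F" for h
    using r_le[OF that] active[OF that] by linarith
  \<comment> \<open>\<open>d\<close> is small enough that \<open>r - d r'\<close> is still a recession direction, so extremality
    of \<open>r\<close> applies to \<open>r = (r - d r') + d r'\<close>.\<close>
  have "\<exists>d>0. \<forall>h\<in>F. a h \<bullet> r \<le> d * (a h \<bullet> r')"
    by (rule finite_ex_pos_le_scaled[OF F]) (rule sign)
  then obtain d where d: "d > 0" "\<forall>h\<in>F. a h \<bullet> r \<le> d * (a h \<bullet> r')"
    by blast
  have "r - d *\<^sub>R r' \<in> rec_cone C"
    using d(2) by (simp add: rec_cone inner_diff_right)
  moreover have "d *\<^sub>R r' \<in> rec_cone C"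
    using d(1) r'_le by (simp add: rec_cone mult_nonneg_nonpos)
  moreover have "r = (r - d *\<^sub>R r') + d *\<^sub>R r'"
    by simp
  moreover have "\<forall>r1 r2. r1 \<in> rec_cone C \<and> r2 \<in> rec_cone C \<and> r = r1 + r2 \<longrightarrow> (\<exists>t\<ge>0. r2 = t *\<^sub>R r)"
    using r by (simp add: extreme_ray_of_def)
  ultimately obtain t where t: "t \<ge> 0" "d *\<^sub>R r' = t *\<^sub>R r"
    by blast
  have "t \<noteq> 0"
    using t(2) d(1) \<open>r' \<noteq> 0\<close> by auto
  moreover have "r' = (t / d) *\<^sub>R r"
  proof -
    have "r' = (1 / d) *\<^sub>R (d *\<^sub>R r')"
      using d(1) by simp
    also have "\<dots> = (t / d) *\<^sub>R r"
      using t(2) by simp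
    finally show ?thesis .
  qed
  ultimately show ?thesis
    using t(1) d(1) by (intro exI[of _ "t / d"]) simp
qed

lemma polyhedron_extreme_rays_finite_up_to_scaling:
  fixes C :: "'a::euclidean_space set"
  assumes "polyhedron C"
  obtains K where "finite K" "\<And>r. extreme_ray_of r C \<Longrightarrow> \<exists>k\<in>K. \<exists>t>0. r = t *\<^sub>R k"
proof -
  obtain F where F: "finite F" "C = \<Inter>F" "\<forall>h\<in>F. \<exists>a b. a \<noteq> 0 \<and> h = {x. a \<bullet> x \<le> b}"
    using assms unfolding polyhedron_def by blast
  then obtain a b where ab: "\<forall>h\<in>F. h = {x. a h \<bullet> x \<le> b h}"
    by metis
  have C: "C = {x. \<forall>h\<in>F. a h \<bullet> x \<le> b h}"
    using F(2) ab by auto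
  define active where "active r = {h\<in>F. a h \<bullet> r = 0}" for r
  define rep where "rep A = (SOME r. extreme_ray_of r C \<and> active r = A)" for A
  define K where "K = rep ` active ` {r. extreme_ray_of r C}"
  have "finite K"
    unfolding K_def by (rule finite_imageI, rule finite_subset[of _ "Pow F"])
      (auto simp: active_def F(1))
  moreover have "\<exists>k\<in>K. \<exists>t>0. r = t *\<^sub>R k" if r: "extreme_ray_of r C" for r
  proof -
    have k: "extreme_ray_of (rep (active r)) C \<and> active (rep (active r)) = active r"
      unfolding rep_def by (rule someI[of _ r]) (simp add: r)
    have "a h \<bullet> rep (active r) = 0 \<longleftrightarrow> a h \<bullet> r = 0" if "h \<in> F" for h
      using k that unfolding active_def by blast
    then have "\<exists>t>0. r = t *\<^sub>R rep (active r)"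
      using extreme_rays_same_active_constraints[OF F(1) C] k r by blast
    moreover have "rep (active r) \<in> K"
      using r by (auto simp: K_def)
    ultimately show ?thesis
      by blast
  qed
  ultimately show ?thesis
    using that by blast
qed

definition represented_directions :: "'a::real_vector set \<Rightarrow> 'a set \<Rightarrow> 'a set" where
  "represented_directions K R = {k\<in>K. \<exists>r\<in>R. \<exists>t>0. r = t *\<^sub>R k}"

lemma card_represented_directions_le:
  "finite K \<Longrightarrow> card (represented_directions K R) \<le> card K"
  unfolding represented_directions_def by (intro card_mono) auto

lemma card_represented_directions_insert_less:
  assumes "finite K" and "k \<in> K" and "r = t *\<^sub>R k" and "t > 0"
    and new: "\<forall>r'\<in>R. \<forall>s>0. r \<noteq> s *\<^sub>R r'"
  shows "card (represented_directions K R) < card (represented_directions K (insert r R))"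
proof (rule psubset_card_mono)
  show "finite (represented_directions K (insert r R))"
    using \<open>finite K\<close> by (simp add: represented_directions_def)
  have "k \<notin> represented_directions K R"
  proof
    assume "k \<in> represented_directions K R"
    then obtain r' s where "r' \<in> R" "s > 0" "r' = s *\<^sub>R k"
      by (auto simp: represented_directions_def)
    then have "r = (t / s) *\<^sub>R r'"
      using \<open>r = t *\<^sub>R k\<close> by simp
    moreover have "t / s > 0"
      using \<open>s > 0\<close> \<open>t > 0\<close> by simp
    ultimately show False
      using new \<open>r' \<in> R\<close> by blast
  qed
  moreover have "represented_directions K R \<subseteq> represented_directions K (insert r R)"
    unfolding represented_directions_def by blast
  moreover have "k \<in> represented_directions K (insert r R)"
    using assms unfolding represented_directions_def by blast
  ultimately show "represented_directions K R \<subset> represented_directions K (insert r R)"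
    by blast
qed

lemma sep_lp_optimal_value_nonneg:
  fixes xb :: "real^'d"
  assumes "sep_lp_optimal V R xb p p0 t1 t2"
  shows "xb \<bullet> p - p0 \<ge> 0"
proof -
  define s :: "real^'d" where "s = (\<chi> i. 1 / (2 * real CARD('d)))"
  have "(\<Sum>i\<in>UNIV. s $ i + s $ i) = 1"
    by (simp add: s_def)
  then have "sep_lp_feasible V R 0 0 s s"
    by (simp add: sep_lp_feasible_def s_def)
  then show ?thesis
    using assms unfolding sep_lp_optimal_def by fastforce
qed

lemma esep_step_IterE:
  fixes X :: "(real^'d) set"
  assumes "esep_step X xb eps c (Iter V R) s" and "eps > 0"
  obtains "s = Stop"
  | nu where "s = Iter (insert nu V) R" "nu \<notin> V" "nu extreme_point_of closure (convex hull X)"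
  | r where "s = Iter V (insert r R)" "extreme_ray_of r (closure (convex hull X))"
      "\<forall>r'\<in>R. \<forall>t>0. r \<noteq> t *\<^sub>R r'"
  using assms(1)
proof (cases rule: esep_step.cases)
  case (iter_ray p p0 t1 t2 r)
  have "p \<bullet> (t *\<^sub>R r') \<le> 0" if "r' \<in> R" "t > 0" for r' t
    using iter_ray(2) that by (simp add: sep_lp_optimal_def sep_lp_feasible_def mult_nonneg_nonpos)
  then have "\<forall>r'\<in>R. \<forall>t>0. r \<noteq> t *\<^sub>R r'"
    using iter_ray(6) by fastforce
  with iter_ray(1,5) that(3) show ?thesis
    by blast
next
  case (iter_add p p0 t1 t2 nu)
  have "p0 < xb \<bullet> p"
    using sep_lp_optimal_value_nonneg[OF iter_add(2)] iter_add(3) \<open>eps > 0\<close> by linarith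
  then have "nu \<notin> V"
    using iter_add(2,6) by (auto simp: sep_lp_optimal_def sep_lp_feasible_def inner_commute)
  with iter_add(1,4) that(2) show ?thesis
    by blast
qed (use that(1) in auto)

lemma esep_step_Iter_potential_less:
  fixes X :: "(real^'d) set"
  assumes step: "esep_step X xb eps c (Iter V R) (Iter V' R')" and "eps > 0"
    and "finite E" and E: "\<And>v. v extreme_point_of closure (convex hull X) \<Longrightarrow> v \<in> E"
    and "finite K"
    and K: "\<And>r. extreme_ray_of r (closure (convex hull X)) \<Longrightarrow> \<exists>k\<in>K. \<exists>t>0. r = t *\<^sub>R k"
  shows "card (V \<inter> E) + card (represented_directions K R)
    < card (V' \<inter> E) + card (represented_directions K R')"
  using step \<open>eps > 0\<close>
proof (cases rule: esep_step_IterE)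
  case (2 nu)
  then have "V \<inter> E \<subset> insert nu V \<inter> E"
    using E by blast
  then show ?thesis
    using 2 \<open>finite E\<close> by (simp add: psubset_card_mono)
next
  case (3 r)
  then obtain k t where "k \<in> K" "t > 0" "r = t *\<^sub>R k"
    using K by blast
  then show ?thesis
    using 3 \<open>finite K\<close> card_represented_directions_insert_less by fastforce
qed simp

lemma esep_run_Iter:
  assumes "\<And>n. esep_step X xb eps c (f n) (f (Suc n))"
  obtains Vs Rs where "\<And>n. f (Suc n) = Iter (Vs n) (Rs n)"
proof -
  have "\<exists>V R. f (Suc n) = Iter V R" for n
    using assms[of n] assms[of "Suc n"]
    by (cases "f (Suc n)") (auto elim: esep_step.cases)
  then obtain Vs Rs where "f (Suc n) = Iter (Vs n) (Rs n)" for n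
    by metis
  then show ?thesis
    by (rule that)
qed

theorem theorem3:
  fixes X :: "(real^'d) set" and xb :: "real^'d" and eps :: real
    and c :: "(real^'d) option" and V R :: "(real^'d) set"
  assumes "polyhedron (closure (convex hull X))"
    and "eps > 0"
    and "finite V" and "finite R"
  shows "\<not> (\<exists>f. f 0 = Start V R \<and> (\<forall>n. esep_step X xb eps c (f n) (f (Suc n))))"
proof
  assume "\<exists>f. f 0 = Start V R \<and> (\<forall>n. esep_step X xb eps c (f n) (f (Suc n)))"
  then obtain f where step: "\<And>n. esep_step X xb eps c (f n) (f (Suc n))"
    by blast
  then obtain Vs Rs where run: "\<And>n. f (Suc n) = Iter (Vs n) (Rs n)"
    by (rule esep_run_Iter) blast
  define E where "E = {v. v extreme_point_of closure (convex hull X)}"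
  have "finite E"
    using assms(1) finite_polyhedron_extreme_points by (simp add: E_def)
  obtain K where "finite K"
    and K: "\<And>r. extreme_ray_of r (closure (convex hull X)) \<Longrightarrow> \<exists>k\<in>K. \<exists>t>0. r = t *\<^sub>R k"
    using polyhedron_extreme_rays_finite_up_to_scaling[OF assms(1)] by blast
  define \<phi> where "\<phi> n = card (Vs n \<inter> E) + card (represented_directions K (Rs n))" for n
  have "\<phi> n < \<phi> (Suc n)" for n
    using esep_step_Iter_potential_less[OF step[of "Suc n", unfolded run] assms(2) \<open>finite E\<close> _
        \<open>finite K\<close> K]
    by (simp add: \<phi>_def E_def)
  then have "strict_mono \<phi>"
    by (simp add: strict_mono_Suc_iff)
  then have "Suc (card E + card K) \<le> \<phi> (Suc (card E + card K))"
    by (rule strict_mono_imp_increasing)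
  moreover have "\<phi> n \<le> card E + card K" for n
    using \<open>finite E\<close> \<open>finite K\<close> card_represented_directions_le[of K]
    by (simp add: \<phi>_def add_mono card_mono)
  ultimately show False
    by (metis not_less_eq_eq)
qed

end
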